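(* For every $f\in V$, the operator $\mathscr L_f:V\to V$ is not a compact operator; that is, for every neighborhood $U$ of $0$ in $V$, the closure of $\mathscr L_f(U)$ is not compact.
   Context: Let $N\ge2$, $\mathbf A$ an $N\times N$ zero-one aperiodic matrix, $\Sigma_{\mathbf A}^+=\{\omega\in\{1,\dots,N\}^{\mathbb N\cup\{0\}}:\mathbf A(\omega_m\omega_{m+1})=1\ \forall m\}$ with shift $\sigma_{\mathbf A}$. $\mathrm{var}_m(\phi)=\sup\{|\phi(\omega)-\phi(\omega')|:\omega_k=\omega'_k,\ 0\le k\le m-1\}$; $V=\{\phi:\Sigma_{\mathbf A}^+\to\mathbb C:\mathrm{var}_m(\phi)^{1/m}\to0\}$ with the (Fréchet) topology generated by the norms $\|\phi\|_\theta=\|\phi\|_\infty+[\phi]_\theta$, $\theta\in(0,1)$, $[\phi]_\theta$ the Lipschitz constant w.r.t. $d_\theta(\omega,\omega')=\theta^{\min\{m:\omega_m\ne\omega'_m\}}$. $(\mathscr L_f\phi)(\omega)=\sum_{\sigma_{\mathbf A}\omega'=\omega}e^{f(\omega')}\phi(\omega')$. A continuous linear operator $T$ on a metrizable complete topological vector space is compact if the closure of $T(U)$ is compact for some neighborhood $U$ of zero. *)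

theory Defs
  imports "HOL-Analysis.Analysis"
begin

text \<open>Zero-one N x N matrices with indices in {1..N}, represented as functions nat => nat => nat.\<close>

fun mat_pow :: "nat \<Rightarrow> (nat \<Rightarrow> nat \<Rightarrow> nat) \<Rightarrow> nat \<Rightarrow> nat \<Rightarrow> nat \<Rightarrow> nat" where
  "mat_pow N A 0 i j = (if i = j then 1 else 0)"
| "mat_pow N A (Suc n) i j = (\<Sum>k\<in>{1..N}. mat_pow N A n i k * A k j)"

definition zero_one_matrix :: "nat \<Rightarrow> (nat \<Rightarrow> nat \<Rightarrow> nat) \<Rightarrow> bool" where
  "zero_one_matrix N A \<longleftrightarrow> (\<forall>i\<in>{1..N}. \<forall>j\<in>{1..N}. A i j = 0 \<or> A i j = 1)"

definition aperiodic :: "nat \<Rightarrow> (nat \<Rightarrow> nat \<Rightarrow> nat) \<Rightarrow> bool" where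
  "aperiodic N A \<longleftrightarrow> (\<exists>M. \<forall>i\<in>{1..N}. \<forall>j\<in>{1..N}. mat_pow N A M i j > 0)"

definition Sigma_A :: "nat \<Rightarrow> (nat \<Rightarrow> nat \<Rightarrow> nat) \<Rightarrow> (nat \<Rightarrow> nat) set" where
  "Sigma_A N A = {\<omega>. (\<forall>m. \<omega> m \<in> {1..N}) \<and> (\<forall>m. A (\<omega> m) (\<omega> (Suc m)) = 1)}"

definition shift :: "(nat \<Rightarrow> nat) \<Rightarrow> (nat \<Rightarrow> nat)" where
  "shift \<omega> = (\<lambda>m. \<omega> (Suc m))"

definition var :: "nat \<Rightarrow> (nat \<Rightarrow> nat \<Rightarrow> nat) \<Rightarrow> nat \<Rightarrow> ((nat \<Rightarrow> nat) \<Rightarrow> complex) \<Rightarrow> real" where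
  "var N A m \<phi> = (SUP p \<in> {(\<omega>, \<omega>'). \<omega> \<in> Sigma_A N A \<and> \<omega>' \<in> Sigma_A N A \<and> (\<forall>k<m. \<omega> k = \<omega>' k)}.
       cmod (\<phi> (fst p) - \<phi> (snd p)))"

text \<open>The space V. Functions are taken to vanish off Sigma_A (extensional representation);
  boundedness on Sigma_A is implied by the variation condition and only makes the real SUP above meaningful.\<close>
definition Vspace :: "nat \<Rightarrow> (nat \<Rightarrow> nat \<Rightarrow> nat) \<Rightarrow> ((nat \<Rightarrow> nat) \<Rightarrow> complex) set" where
  "Vspace N A = {\<phi>. (\<forall>\<omega>. \<omega> \<notin> Sigma_A N A \<longrightarrow> \<phi> \<omega> = 0)
      \<and> bounded (\<phi> ` Sigma_A N A)
      \<and> ((\<lambda>m. var N A m \<phi> powr (1 / real m)) \<longlonglongrightarrow> 0)}"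

definition first_diff :: "(nat \<Rightarrow> nat) \<Rightarrow> (nat \<Rightarrow> nat) \<Rightarrow> nat" where
  "first_diff \<omega> \<omega>' = (LEAST m. \<omega> m \<noteq> \<omega>' m)"

definition d_theta :: "real \<Rightarrow> (nat \<Rightarrow> nat) \<Rightarrow> (nat \<Rightarrow> nat) \<Rightarrow> real" where
  "d_theta \<theta> \<omega> \<omega>' = (if \<omega> = \<omega>' then 0 else \<theta> ^ first_diff \<omega> \<omega>')"

definition sup_norm :: "nat \<Rightarrow> (nat \<Rightarrow> nat \<Rightarrow> nat) \<Rightarrow> ((nat \<Rightarrow> nat) \<Rightarrow> complex) \<Rightarrow> real" where
  "sup_norm N A \<phi> = (SUP \<omega> \<in> Sigma_A N A. cmod (\<phi> \<omega>))"

definition lip_const :: "nat \<Rightarrow> (nat \<Rightarrow> nat \<Rightarrow> nat) \<Rightarrow> real \<Rightarrow> ((nat \<Rightarrow> nat) \<Rightarrow> complex) \<Rightarrow> real" where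
  "lip_const N A \<theta> \<phi> = (SUP p \<in> {(\<omega>, \<omega>'). \<omega> \<in> Sigma_A N A \<and> \<omega>' \<in> Sigma_A N A \<and> \<omega> \<noteq> \<omega>'}.
       cmod (\<phi> (fst p) - \<phi> (snd p)) / d_theta \<theta> (fst p) (snd p))"

definition theta_norm :: "nat \<Rightarrow> (nat \<Rightarrow> nat \<Rightarrow> nat) \<Rightarrow> real \<Rightarrow> ((nat \<Rightarrow> nat) \<Rightarrow> complex) \<Rightarrow> real" where
  "theta_norm N A \<theta> \<phi> = sup_norm N A \<phi> + lip_const N A \<theta> \<phi>"

definition V_topology :: "nat \<Rightarrow> (nat \<Rightarrow> nat \<Rightarrow> nat) \<Rightarrow> ((nat \<Rightarrow> nat) \<Rightarrow> complex) topology" where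
  "V_topology N A = topology_generated_by
     {{\<psi> \<in> Vspace N A. theta_norm N A \<theta> (\<psi> - \<phi>) < \<epsilon>} | \<phi> \<theta> \<epsilon>.
        \<phi> \<in> Vspace N A \<and> 0 < \<theta> \<and> \<theta> < 1 \<and> 0 < \<epsilon>}"

definition transfer_op :: "nat \<Rightarrow> (nat \<Rightarrow> nat \<Rightarrow> nat) \<Rightarrow> ((nat \<Rightarrow> nat) \<Rightarrow> complex)
    \<Rightarrow> ((nat \<Rightarrow> nat) \<Rightarrow> complex) \<Rightarrow> ((nat \<Rightarrow> nat) \<Rightarrow> complex)" where
  "transfer_op N A f \<phi> = (\<lambda>\<omega>. if \<omega> \<in> Sigma_A N A then
      (\<Sum>\<omega>' \<in> {\<omega>' \<in> Sigma_A N A. shift \<omega>' = \<omega>}. exp (f \<omega>') * \<phi> \<omega>') else 0)"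

end

theory Submission
  imports Defs
begin

text \<open>
  A neighbourhood of 0 in V contains every \<psi> \<in> V with \<open>\<parallel>\<psi>\<parallel>_\<theta> < \<epsilon>\<close> for all
  \<open>\<theta> \<in> [\<theta>0, 1)\<close>. The cylinder function \<open>\<psi> = c 1[\<omega>_0 = a, \<omega>_(K+1) = s]\<close> has
  \<open>\<parallel>\<psi>\<parallel>_\<theta> \<le> 2c / \<theta>^(K+1)\<close>, so with \<open>c = \<epsilon> \<theta>0^(K+1) / 4\<close> it lies in that
  neighbourhood for every K. But if \<open>A(a, \<omega>_0) = 1\<close> then
  \<open>(\<L>_f \<psi>)(\<omega>) = exp (f (a\<omega>)) c 1[\<omega>_K = s]\<close>, which separates two points agreeing exactly
  up to position K, so its Lipschitz constant for \<open>d_(\<theta>0/2)\<close> is at least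
  \<open>exp (-\<parallel>f\<parallel>_\<infinity>) c (2/\<theta>0)^K \<sim> \<epsilon> 2^K\<close>; aperiodicity provides such pairs for
  arbitrarily large K. A compact subset of V, on the other hand, is covered by finitely many
  \<open>\<parallel>\<cdot>\<parallel>_(\<theta>0/2)\<close>-balls of radius 1, so its \<open>\<theta>0/2\<close>-Lipschitz constants are bounded.
\<close>

definition prepend :: "nat \<Rightarrow> (nat \<Rightarrow> nat) \<Rightarrow> (nat \<Rightarrow> nat)" where
  "prepend b \<omega> = (\<lambda>k. case k of 0 \<Rightarrow> b | Suc k' \<Rightarrow> \<omega> k')"

lemma shift_prepend [simp]: "shift (prepend b \<omega>) = \<omega>"
  by (simp add: shift_def prepend_def)

lemma prepend_0 [simp]: "prepend b \<omega> 0 = b"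
  by (simp add: prepend_def)

lemma prepend_Suc [simp]: "prepend b \<omega> (Suc k) = \<omega> k"
  by (simp add: prepend_def)

lemma prepend_shift: "prepend (\<omega> 0) (shift \<omega>) = \<omega>"
  by (rule ext) (simp add: prepend_def shift_def split: nat.split)

lemma prepend_agree:
  assumes "\<forall>k<m. \<omega> k = \<omega>' k"
  shows "\<forall>k<Suc m. prepend b \<omega> k = prepend b \<omega>' k"
  using assms by (auto simp: prepend_def split: nat.split)

lemma first_diff_eqI:
  assumes "\<forall>k<K. \<omega> k = \<omega>' k" "\<omega> K \<noteq> \<omega>' K"
  shows "first_diff \<omega> \<omega>' = K"
  unfolding first_diff_def by (rule Least_equality) (use assms leI in blast)+

lemma agree_before_first_diff: "\<forall>k<first_diff \<omega> \<omega>'. \<omega> k = \<omega>' k"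
  unfolding first_diff_def using not_less_Least by blast

lemma d_theta_eq_power: "\<omega> \<noteq> \<omega>' \<Longrightarrow> d_theta \<theta> \<omega> \<omega>' = \<theta> ^ first_diff \<omega> \<omega>'"
  by (simp add: d_theta_def)

lemma d_theta_pos: "\<omega> \<noteq> \<omega>' \<Longrightarrow> 0 < \<theta> \<Longrightarrow> 0 < d_theta \<theta> \<omega> \<omega>'"
  by (simp add: d_theta_def)

lemma norm_exp_diff_le:
  fixes u v :: complex
  assumes "cmod u \<le> R" "cmod v \<le> R"
  shows "cmod (exp u - exp v) \<le> exp R * cmod (u - v)"
proof (rule field_differentiable_bound[of "cball 0 R" exp exp "exp R"])
  fix z :: complex assume z: "z \<in> cball 0 R"
  show "(exp has_field_derivative exp z) (at z within cball 0 R)"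
    by (rule has_field_derivative_at_within) (rule DERIV_exp)
  have "cmod (exp z) \<le> exp (cmod z)" by (rule norm_exp)
  also have "\<dots> \<le> exp R" using z by simp
  finally show "cmod (exp z) \<le> exp R" .
qed (use assms in auto)

locale aperiodic_sft =
  fixes N :: nat and A :: "nat \<Rightarrow> nat \<Rightarrow> nat"
  assumes two_le_N: "N \<ge> 2" and zero_one: "zero_one_matrix N A" and aperiodic: "aperiodic N A"
begin

abbreviation \<Sigma> :: "(nat \<Rightarrow> nat) set" where "\<Sigma> \<equiv> Sigma_A N A"

subsection \<open>Admissible sequences\<close>

lemma prepend_in_Sigma: "\<omega> \<in> \<Sigma> \<Longrightarrow> b \<in> {1..N} \<Longrightarrow> A b (\<omega> 0) = 1 \<Longrightarrow> prepend b \<omega> \<in> \<Sigma>"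
  unfolding Sigma_A_def by (auto simp: prepend_def split: nat.split)

lemma Sigma_symbol: "\<omega> \<in> \<Sigma> \<Longrightarrow> \<omega> k \<in> {1..N}"
  unfolding Sigma_A_def by blast

lemma path_if_mat_pow_pos:
  assumes "i \<in> {1..N}" "j \<in> {1..N}" "mat_pow N A n i j > 0"
  shows "\<exists>w. w 0 = i \<and> w n = j \<and> (\<forall>k\<le>n. w k \<in> {1..N}) \<and> (\<forall>k<n. A (w k) (w (Suc k)) = 1)"
  using assms(2,3)
proof (induction n arbitrary: j)
  case 0
  then have "i = j" by (auto split: if_splits)
  then show ?case using assms(1) by (intro exI[of _ "\<lambda>_. i"]) auto
next
  case (Suc n)
  have "\<exists>k\<in>{1..N}. mat_pow N A n i k * A k j \<noteq> 0"
  proof (rule ccontr)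
    assume "\<not> ?thesis"
    then have "(\<Sum>k\<in>{1..N}. mat_pow N A n i k * A k j) = 0" by (intro sum.neutral) blast
    with Suc.prems(2) show False by (metis mat_pow.simps(2) less_irrefl)
  qed
  then obtain k where k: "k \<in> {1..N}" "mat_pow N A n i k > 0" "A k j \<noteq> 0"
    by auto
  then have Akj: "A k j = 1" using zero_one Suc.prems(1) unfolding zero_one_matrix_def by metis
  obtain w where w: "w 0 = i" "w n = k" "\<forall>k\<le>n. w k \<in> {1..N}" "\<forall>k<n. A (w k) (w (Suc k)) = 1"
    using Suc.IH[OF k(1,2)] by blast
  show ?case
  proof (intro exI[of _ "w(Suc n := j)"] conjI allI impI)
    fix m assume "m \<le> Suc n" then show "(w(Suc n := j)) m \<in> {1..N}"
      using w(3) Suc.prems(1) by (cases "m = Suc n") auto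
  next
    fix m assume "m < Suc n" then show "A ((w(Suc n := j)) m) ((w(Suc n := j)) (Suc m)) = 1"
      using w(2,4) Akj by (cases "m = n") auto
  qed (use w in simp_all)
qed

definition mixing_time :: nat where
  "mixing_time = (SOME M. \<forall>i\<in>{1..N}. \<forall>j\<in>{1..N}. mat_pow N A M i j > 0)"

lemma mat_pow_mixing_time_pos: "i \<in> {1..N} \<Longrightarrow> j \<in> {1..N} \<Longrightarrow> mat_pow N A mixing_time i j > 0"
  using someI_ex[OF aperiodic[unfolded aperiodic_def]] unfolding mixing_time_def by blast

lemma mixing_time_pos: "mixing_time > 0"
proof (rule ccontr)
  assume "\<not> mixing_time > 0"
  then have "mat_pow N A mixing_time 1 2 = 0" by simp
  with mat_pow_mixing_time_pos[of 1 2] two_le_N show False by simp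
qed

lemma path_between:
  assumes "i \<in> {1..N}" "j \<in> {1..N}"
  obtains w where "w 0 = i" "w mixing_time = j" "\<forall>k\<le>mixing_time. w k \<in> {1..N}"
    "\<forall>k<mixing_time. A (w k) (w (Suc k)) = 1"
  using path_if_mat_pow_pos[OF assms mat_pow_mixing_time_pos[OF assms]] by blast

lemma successor_exists: "i \<in> {1..N} \<Longrightarrow> \<exists>j\<in>{1..N}. A i j = 1"
proof -
  assume i: "i \<in> {1..N}"
  have "1 \<in> {1..N}" using two_le_N by simp
  from path_between[OF i this] obtain w where
    "w 0 = i" "\<forall>k\<le>mixing_time. w k \<in> {1..N}" "\<forall>k<mixing_time. A (w k) (w (Suc k)) = 1"
    by metis
  then show ?thesis using mixing_time_pos by (intro bexI[of _ "w 1"]) auto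
qed

lemma predecessor_exists: "j \<in> {1..N} \<Longrightarrow> \<exists>i\<in>{1..N}. A i j = 1"
proof -
  assume j: "j \<in> {1..N}"
  have "1 \<in> {1..N}" using two_le_N by simp
  from path_between[OF this j] obtain w where
    "w mixing_time = j" "\<forall>k\<le>mixing_time. w k \<in> {1..N}" "\<forall>k<mixing_time. A (w k) (w (Suc k)) = 1"
    by metis
  then show ?thesis using mixing_time_pos
    by (intro bexI[of _ "w (mixing_time - 1)"]) (metis Suc_pred' diff_le_self diff_less less_numeral_extra(1))+
qed

definition next_symbol :: "nat \<Rightarrow> nat" where
  "next_symbol i = (SOME j. j \<in> {1..N} \<and> A i j = 1)"

lemma next_symbol: "i \<in> {1..N} \<Longrightarrow> next_symbol i \<in> {1..N} \<and> A i (next_symbol i) = 1"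
  unfolding next_symbol_def using successor_exists by (metis (mono_tags, lifting) someI_ex)

lemma next_symbol_iterate: "i \<in> {1..N} \<Longrightarrow> (next_symbol ^^ m) i \<in> {1..N}"
proof (induction m)
  case (Suc m) then show ?case using next_symbol[of "(next_symbol ^^ m) i"] by simp
qed simp

definition extend_word :: "(nat \<Rightarrow> nat) \<Rightarrow> nat \<Rightarrow> (nat \<Rightarrow> nat)" where
  "extend_word w n = (\<lambda>k. if k \<le> n then w k else (next_symbol ^^ (k - n)) (w n))"

lemma extend_word_in_Sigma:
  assumes "\<forall>k\<le>n. w k \<in> {1..N}" "\<forall>k<n. A (w k) (w (Suc k)) = 1"
  shows "extend_word w n \<in> \<Sigma>"
proof -
  have symbol: "extend_word w n k \<in> {1..N}" for k
    using assms(1) next_symbol_iterate[of "w n"] by (auto simp: extend_word_def)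
  have tail: "extend_word w n (Suc k) = next_symbol (extend_word w n k)" if "k \<ge> n" for k
  proof -
    have "Suc k - n = Suc (k - n)" using that by simp
    then show ?thesis using that by (auto simp: extend_word_def)
  qed
  have "A (extend_word w n k) (extend_word w n (Suc k)) = 1" for k
  proof (cases "k < n")
    case True then show ?thesis using assms(2) by (simp add: extend_word_def)
  next
    case False then show ?thesis using tail[of k] next_symbol symbol[of k] by simp
  qed
  then show ?thesis unfolding Sigma_A_def using symbol by auto
qed

lemma pair_differing_after_0:
  obtains \<eta> \<eta>' K where "\<eta> \<in> \<Sigma>" "\<eta>' \<in> \<Sigma>" "0 < K" "\<forall>k<K. \<eta> k = \<eta>' k" "\<eta> K \<noteq> \<eta>' K"
proof -
  have 1: "1 \<in> {1..N}" and 2: "2 \<in> {1..N}" using two_le_N by auto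
  obtain p where p: "p 0 = 1" "p mixing_time = 1" "\<forall>k\<le>mixing_time. p k \<in> {1..N}"
      "\<forall>k<mixing_time. A (p k) (p (Suc k)) = 1"
    using path_between[OF 1 1] by metis
  obtain q where q: "q 0 = 1" "q mixing_time = 2" "\<forall>k\<le>mixing_time. q k \<in> {1..N}"
      "\<forall>k<mixing_time. A (q k) (q (Suc k)) = 1"
    using path_between[OF 1 2] by metis
  define \<eta> where "\<eta> = extend_word p mixing_time"
  define \<eta>' where "\<eta>' = extend_word q mixing_time"
  define K where "K = first_diff \<eta> \<eta>'"
  have "\<eta> mixing_time \<noteq> \<eta>' mixing_time" using p q by (simp add: \<eta>_def \<eta>'_def extend_word_def)
  then have "\<eta> K \<noteq> \<eta>' K" unfolding K_def first_diff_def by (rule LeastI)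
  moreover have "\<forall>k<K. \<eta> k = \<eta>' k" unfolding K_def by (rule agree_before_first_diff)
  moreover have "\<eta> 0 = \<eta>' 0" using p q by (simp add: \<eta>_def \<eta>'_def extend_word_def)
  ultimately have "0 < K" by (metis gr0I)
  with \<open>\<eta> K \<noteq> \<eta>' K\<close> \<open>\<forall>k<K. \<eta> k = \<eta>' k\<close> show thesis
    using that extend_word_in_Sigma[OF p(3,4)] extend_word_in_Sigma[OF q(3,4)]
    unfolding \<eta>_def \<eta>'_def by blast
qed

text \<open>Prepending a common predecessor pushes the first disagreement one step further.\<close>
lemma pair_differing_after:
  "\<exists>\<eta> \<eta>' K. \<eta> \<in> \<Sigma> \<and> \<eta>' \<in> \<Sigma> \<and> n < K \<and> (\<forall>k<K. \<eta> k = \<eta>' k) \<and> \<eta> K \<noteq> \<eta>' K"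
proof (induction n)
  case 0 then show ?case using pair_differing_after_0 by metis
next
  case (Suc n)
  then obtain \<eta> \<eta>' K where h: "\<eta> \<in> \<Sigma>" "\<eta>' \<in> \<Sigma>" "n < K" "\<forall>k<K. \<eta> k = \<eta>' k" "\<eta> K \<noteq> \<eta>' K"
    by blast
  obtain b where b: "b \<in> {1..N}" "A b (\<eta> 0) = 1"
    using predecessor_exists[OF Sigma_symbol[OF h(1)]] by blast
  have "\<eta> 0 = \<eta>' 0" using h by auto
  then have "prepend b \<eta> \<in> \<Sigma>" "prepend b \<eta>' \<in> \<Sigma>" using prepend_in_Sigma b h(1,2) by auto
  then show ?case using h(3,5) prepend_agree[OF h(4)]
    by (intro exI[of _ "prepend b \<eta>"] exI[of _ "prepend b \<eta>'"] exI[of _ "Suc K"]) auto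
qed

lemma Sigma_nonempty: "\<Sigma> \<noteq> {}"
  using pair_differing_after_0 by blast

subsection \<open>Lipschitz ratios and the space V\<close>

definition distinct_pairs :: "((nat \<Rightarrow> nat) \<times> (nat \<Rightarrow> nat)) set" where
  "distinct_pairs = {(\<omega>, \<omega>'). \<omega> \<in> \<Sigma> \<and> \<omega>' \<in> \<Sigma> \<and> \<omega> \<noteq> \<omega>'}"

definition lip_ratio :: "real \<Rightarrow> ((nat \<Rightarrow> nat) \<Rightarrow> complex) \<Rightarrow> (nat \<Rightarrow> nat) \<times> (nat \<Rightarrow> nat) \<Rightarrow> real" where
  "lip_ratio \<theta> \<phi> p = cmod (\<phi> (fst p) - \<phi> (snd p)) / d_theta \<theta> (fst p) (snd p)"

lemma lip_const_eq_SUP: "lip_const N A \<theta> \<phi> = (SUP p\<in>distinct_pairs. lip_ratio \<theta> \<phi> p)"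
  unfolding lip_const_def distinct_pairs_def lip_ratio_def by simp

lemma distinct_pairs_nonempty: "distinct_pairs \<noteq> {}"
proof -
  obtain \<eta> \<eta>' K where "\<eta> \<in> \<Sigma>" "\<eta>' \<in> \<Sigma>" "\<eta> K \<noteq> \<eta>' K"
    using pair_differing_after_0 by metis
  then show ?thesis unfolding distinct_pairs_def by auto
qed

lemma lip_ratio_at_first_diff:
  assumes "\<omega> \<noteq> \<omega>'"
  shows "lip_ratio \<theta> \<phi> (\<omega>, \<omega>') = cmod (\<phi> \<omega> - \<phi> \<omega>') / \<theta> ^ first_diff \<omega> \<omega>'"
  unfolding lip_ratio_def using d_theta_eq_power[OF assms] by simp

lemma lip_ratio_add:
  assumes "p \<in> distinct_pairs" "0 < \<theta>"
  shows "lip_ratio \<theta> (\<lambda>x. a x + b x) p \<le> lip_ratio \<theta> a p + lip_ratio \<theta> b p"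
proof -
  have d: "0 < d_theta \<theta> (fst p) (snd p)" using assms d_theta_pos unfolding distinct_pairs_def by auto
  have "cmod (a (fst p) + b (fst p) - (a (snd p) + b (snd p)))
      \<le> cmod (a (fst p) - a (snd p)) + cmod (b (fst p) - b (snd p))"
    by (metis add_diff_add norm_triangle_ineq)
  then show ?thesis unfolding lip_ratio_def using d by (simp add: add_divide_distrib[symmetric] divide_right_mono)
qed

lemma lip_ratio_diff:
  assumes "p \<in> distinct_pairs" "0 < \<theta>"
  shows "lip_ratio \<theta> (\<lambda>x. a x - b x) p \<le> lip_ratio \<theta> a p + lip_ratio \<theta> b p"
proof -
  have "lip_ratio \<theta> (\<lambda>x. - b x) p = lip_ratio \<theta> b p"
    unfolding lip_ratio_def by (simp add: norm_minus_commute)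
  then show ?thesis using lip_ratio_add[OF assms, of a "\<lambda>x. - b x"] by simp
qed

text \<open>The functions for which the real suprema in \<open>theta_norm\<close> are not junk values.\<close>
definition lip_bounded :: "real \<Rightarrow> ((nat \<Rightarrow> nat) \<Rightarrow> complex) \<Rightarrow> bool" where
  "lip_bounded \<theta> \<phi> \<longleftrightarrow> bdd_above (lip_ratio \<theta> \<phi> ` distinct_pairs) \<and> bdd_above ((\<lambda>\<omega>. cmod (\<phi> \<omega>)) ` \<Sigma>)"

lemma lip_bounded_zero: "lip_bounded \<theta> (\<lambda>_. 0)"
  unfolding lip_bounded_def lip_ratio_def by (auto intro!: bdd_aboveI2[where M=0])

lemma lip_bounded_diff:
  assumes "lip_bounded \<theta> a" "lip_bounded \<theta> b" "0 < \<theta>"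
  shows "lip_bounded \<theta> (\<lambda>x. a x - b x)"
proof -
  obtain B1 where "\<forall>p\<in>distinct_pairs. lip_ratio \<theta> a p \<le> B1"
    using assms(1) unfolding lip_bounded_def bdd_above_def by auto
  moreover obtain B2 where "\<forall>p\<in>distinct_pairs. lip_ratio \<theta> b p \<le> B2"
    using assms(2) unfolding lip_bounded_def bdd_above_def by auto
  moreover obtain B3 where "\<forall>x\<in>\<Sigma>. cmod (a x) \<le> B3"
    using assms(1) unfolding lip_bounded_def bdd_above_def by auto
  moreover obtain B4 where "\<forall>x\<in>\<Sigma>. cmod (b x) \<le> B4"
    using assms(2) unfolding lip_bounded_def bdd_above_def by auto
  ultimately have B: "\<forall>p\<in>distinct_pairs. lip_ratio \<theta> a p \<le> B1" "\<forall>p\<in>distinct_pairs. lip_ratio \<theta> b p \<le> B2"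
    "\<forall>x\<in>\<Sigma>. cmod (a x) \<le> B3" "\<forall>x\<in>\<Sigma>. cmod (b x) \<le> B4"
    by blast+
  have "\<forall>p\<in>distinct_pairs. lip_ratio \<theta> (\<lambda>x. a x - b x) p \<le> B1 + B2"
    using B lip_ratio_diff[OF _ assms(3)] by (meson add_mono order_trans)
  moreover have "\<forall>x\<in>\<Sigma>. cmod (a x - b x) \<le> B3 + B4"
    using B by (meson add_mono norm_triangle_ineq4 order_trans)
  ultimately show ?thesis unfolding lip_bounded_def by (auto intro: bdd_aboveI2)
qed

lemma lip_ratio_le_lip_const:
  "lip_bounded \<theta> \<phi> \<Longrightarrow> p \<in> distinct_pairs \<Longrightarrow> lip_ratio \<theta> \<phi> p \<le> lip_const N A \<theta> \<phi>"
  unfolding lip_const_eq_SUP lip_bounded_def by (auto intro: cSUP_upper)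

lemma lip_const_le_theta_norm:
  assumes "lip_bounded \<theta> \<phi>"
  shows "lip_const N A \<theta> \<phi> \<le> theta_norm N A \<theta> \<phi>"
proof -
  obtain \<omega> where "\<omega> \<in> \<Sigma>" using Sigma_nonempty by blast
  then have "cmod (\<phi> \<omega>) \<le> sup_norm N A \<phi>"
    using assms unfolding sup_norm_def lip_bounded_def by (auto intro: cSUP_upper)
  then have "0 \<le> sup_norm N A \<phi>" by (meson norm_ge_zero order_trans)
  then show ?thesis unfolding theta_norm_def by simp
qed

lemma theta_norm_add_le:
  assumes "lip_bounded \<theta> a" "lip_bounded \<theta> b" "0 < \<theta>"
  shows "theta_norm N A \<theta> (\<lambda>x. a x + b x) \<le> theta_norm N A \<theta> a + theta_norm N A \<theta> b"
proof -
  have "sup_norm N A (\<lambda>x. a x + b x) \<le> sup_norm N A a + sup_norm N A b"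
    unfolding sup_norm_def
  proof (rule cSUP_least[OF Sigma_nonempty])
    fix x assume x: "x \<in> \<Sigma>"
    have "cmod (a x) \<le> (SUP \<omega>\<in>\<Sigma>. cmod (a \<omega>))" "cmod (b x) \<le> (SUP \<omega>\<in>\<Sigma>. cmod (b \<omega>))"
      using assms x unfolding lip_bounded_def by (auto intro: cSUP_upper)
    then show "cmod (a x + b x) \<le> (SUP \<omega>\<in>\<Sigma>. cmod (a \<omega>)) + (SUP \<omega>\<in>\<Sigma>. cmod (b \<omega>))"
      by (meson add_mono norm_triangle_ineq order_trans)
  qed
  moreover have "lip_const N A \<theta> (\<lambda>x. a x + b x) \<le> lip_const N A \<theta> a + lip_const N A \<theta> b"
    unfolding lip_const_eq_SUP[of _ "\<lambda>x. a x + b x"]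
  proof (rule cSUP_least[OF distinct_pairs_nonempty])
    fix p assume p: "p \<in> distinct_pairs"
    show "lip_ratio \<theta> (\<lambda>x. a x + b x) p \<le> lip_const N A \<theta> a + lip_const N A \<theta> b"
      using lip_ratio_add[OF p assms(3), of a b]
        lip_ratio_le_lip_const[OF assms(1) p] lip_ratio_le_lip_const[OF assms(2) p] by linarith
  qed
  ultimately show ?thesis unfolding theta_norm_def by linarith
qed

lemma theta_norm_zero: "theta_norm N A \<theta> (\<lambda>_. 0) = 0"
proof -
  have "sup_norm N A (\<lambda>_. 0) = 0" unfolding sup_norm_def using Sigma_nonempty by simp
  moreover have "lip_const N A \<theta> (\<lambda>_. 0) = 0"
    unfolding lip_const_eq_SUP lip_ratio_def using distinct_pairs_nonempty by simp
  ultimately show ?thesis unfolding theta_norm_def by simp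
qed

lemma var_ge:
  assumes "bounded (\<phi> ` \<Sigma>)" "\<omega> \<in> \<Sigma>" "\<omega>' \<in> \<Sigma>" "\<forall>k<m. \<omega> k = \<omega>' k"
  shows "cmod (\<phi> \<omega> - \<phi> \<omega>') \<le> var N A m \<phi>"
proof -
  obtain B where B: "\<forall>x\<in>\<Sigma>. cmod (\<phi> x) \<le> B" using assms(1) unfolding bounded_iff by auto
  let ?Q = "{(\<omega>, \<omega>'). \<omega> \<in> \<Sigma> \<and> \<omega>' \<in> \<Sigma> \<and> (\<forall>k<m. \<omega> k = \<omega>' k)}"
  have "bdd_above ((\<lambda>p. cmod (\<phi> (fst p) - \<phi> (snd p))) ` ?Q)"
  proof (rule bdd_aboveI2)
    fix p assume "p \<in> ?Q"
    then obtain x y where xy: "p = (x, y)" "x \<in> \<Sigma>" "y \<in> \<Sigma>" by auto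
    then have "cmod (\<phi> x) \<le> B" "cmod (\<phi> y) \<le> B" using B by auto
    then show "cmod (\<phi> (fst p) - \<phi> (snd p)) \<le> B + B"
      using xy(1) norm_triangle_ineq4[of "\<phi> x" "\<phi> y"] by simp
  qed
  moreover have "(\<omega>, \<omega>') \<in> ?Q" using assms by auto
  ultimately show ?thesis unfolding var_def
    using cSUP_upper[of "(\<omega>, \<omega>')" ?Q "\<lambda>p. cmod (\<phi> (fst p) - \<phi> (snd p))"] by simp
qed

lemma var_nonneg: "bounded (\<phi> ` \<Sigma>) \<Longrightarrow> 0 \<le> var N A m \<phi>"
proof -
  assume "bounded (\<phi> ` \<Sigma>)"
  moreover obtain \<omega> where "\<omega> \<in> \<Sigma>" using Sigma_nonempty by blast
  ultimately show ?thesis using var_ge[of \<phi> \<omega> \<omega>] by simp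
qed

lemma var_le:
  assumes "\<And>\<omega> \<omega>'. \<omega> \<in> \<Sigma> \<Longrightarrow> \<omega>' \<in> \<Sigma> \<Longrightarrow> \<forall>k<m. \<omega> k = \<omega>' k \<Longrightarrow> cmod (\<phi> \<omega> - \<phi> \<omega>') \<le> C"
  shows "var N A m \<phi> \<le> C"
proof -
  obtain \<omega> where "\<omega> \<in> \<Sigma>" using Sigma_nonempty by blast
  then have "{(\<omega>, \<omega>'). \<omega> \<in> \<Sigma> \<and> \<omega>' \<in> \<Sigma> \<and> (\<forall>k<m. \<omega> k = \<omega>' k)} \<noteq> {}" by auto
  then show ?thesis unfolding var_def by (rule cSUP_least) (use assms in auto)
qed

lemma Vspace_if_var_dominated:
  assumes gV: "g \<in> Vspace N A" and zero: "\<forall>\<omega>. \<omega> \<notin> \<Sigma> \<longrightarrow> \<phi> \<omega> = 0" and bdd: "bounded (\<phi> ` \<Sigma>)"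
    and C: "C \<ge> 0"
    and dom: "\<And>m \<omega> \<omega>'. m \<ge> m0 \<Longrightarrow> \<omega> \<in> \<Sigma> \<Longrightarrow> \<omega>' \<in> \<Sigma> \<Longrightarrow> \<forall>k<m. \<omega> k = \<omega>' k
              \<Longrightarrow> cmod (\<phi> \<omega> - \<phi> \<omega>') \<le> C * var N A (Suc m) g"
  shows "\<phi> \<in> Vspace N A"
proof -
  define v where "v m = var N A m g" for m
  have gb: "bounded (g ` \<Sigma>)" and glim: "(\<lambda>m. v m powr (1 / real m)) \<longlonglongrightarrow> 0"
    using gV unfolding Vspace_def v_def by auto
  have v_nonneg: "0 \<le> v m" for m unfolding v_def using var_nonneg[OF gb] .
  have var_le_v: "var N A m \<phi> \<le> C * v (Suc m)" if "m \<ge> m0" for m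
    unfolding v_def by (rule var_le) (use dom that in auto)
  have dominant: "(\<lambda>m. (C * v (Suc m)) powr (1 / real m)) \<longlonglongrightarrow> 0"
  proof (cases "C = 0")
    case False
    then have "C > 0" using C by simp
    have split: "(C * v (Suc m)) powr (1 / real m) =
        C powr (1 / real m) * ((v (Suc m) powr (1 / real (Suc m))) powr (real (Suc m) / real m))" for m
    proof -
      have "(1 / real (Suc m)) * (real (Suc m) / real m) = 1 / real m" by simp
      then show ?thesis using C v_nonneg[of "Suc m"] by (simp add: powr_mult powr_powr)
    qed
    have "(\<lambda>m. C powr (1 / real m)) \<longlonglongrightarrow> C powr 0"
      by (rule tendsto_powr) (use \<open>C > 0\<close> lim_1_over_n in auto)
    moreover have "(\<lambda>m. (v (Suc m) powr (1 / real (Suc m))) powr (real (Suc m) / real m)) \<longlonglongrightarrow> 0"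
      by (rule tendsto_zero_powrI[OF LIMSEQ_Suc[OF glim] LIMSEQ_Suc_n_over_n]) auto
    ultimately show ?thesis unfolding split using tendsto_mult by force
  qed simp
  have "(\<lambda>m. var N A m \<phi> powr (1 / real m)) \<longlonglongrightarrow> 0"
  proof (rule Lim_null_comparison[OF _ dominant])
    show "\<forall>\<^sub>F m in sequentially. norm (var N A m \<phi> powr (1 / real m)) \<le> (C * v (Suc m)) powr (1 / real m)"
      unfolding eventually_sequentially
      by (rule exI[of _ m0]) (auto intro!: powr_mono2 var_le_v var_nonneg[OF bdd])
  qed
  then show ?thesis unfolding Vspace_def using zero bdd by auto
qed

lemma Vspace_var_le_power:
  assumes "\<phi> \<in> Vspace N A" "0 < \<theta>" "\<theta> < 1"
  obtains m0 where "\<And>m. m \<ge> m0 \<Longrightarrow> var N A m \<phi> \<le> \<theta> ^ m"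
proof -
  have bdd: "bounded (\<phi> ` \<Sigma>)" and lim: "(\<lambda>m. var N A m \<phi> powr (1 / real m)) \<longlonglongrightarrow> 0"
    using assms(1) unfolding Vspace_def by auto
  obtain m0 where m0: "\<And>m. m \<ge> m0 \<Longrightarrow> var N A m \<phi> powr (1 / real m) < \<theta>"
    using order_tendstoD(2)[OF lim assms(2)] unfolding eventually_sequentially by blast
  have "var N A m \<phi> \<le> \<theta> ^ m" if "m \<ge> Suc m0" for m
  proof (cases "var N A m \<phi> = 0")
    case False
    have "var N A m \<phi> = (var N A m \<phi> powr (1 / real m)) powr (real m)"
      using that False var_nonneg[OF bdd] by (simp add: powr_powr)
    also have "\<dots> \<le> \<theta> powr (real m)"
      using m0[of m] that by (intro powr_mono2) auto
    also have "\<dots> = \<theta> ^ m" using assms(2) by (simp add: powr_realpow)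
    finally show ?thesis .
  qed (use assms(2) in simp)
  then show thesis using that by blast
qed

lemma Vspace_lip_bounded:
  assumes V: "\<phi> \<in> Vspace N A" and \<theta>: "0 < \<theta>" "\<theta> < 1"
  shows "lip_bounded \<theta> \<phi>"
proof -
  have bdd: "bounded (\<phi> ` \<Sigma>)" using V unfolding Vspace_def by auto
  obtain B where B: "\<forall>x\<in>\<Sigma>. cmod (\<phi> x) \<le> B" using bdd unfolding bounded_iff by auto
  obtain m0 where small_var: "\<And>m. m \<ge> m0 \<Longrightarrow> var N A m \<phi> \<le> \<theta> ^ m"
    using Vspace_var_le_power[OF assms] by blast
  have "B \<ge> 0" using B Sigma_nonempty by (meson all_not_in_conv norm_ge_zero order_trans)
  have "lip_ratio \<theta> \<phi> p \<le> 1 + 2 * B / \<theta> ^ m0" if p: "p \<in> distinct_pairs" for p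
  proof -
    obtain \<omega> \<omega>' where pe: "p = (\<omega>, \<omega>')" "\<omega> \<in> \<Sigma>" "\<omega>' \<in> \<Sigma>" "\<omega> \<noteq> \<omega>'"
      using p unfolding distinct_pairs_def by auto
    define k where "k = first_diff \<omega> \<omega>'"
    have ratio: "lip_ratio \<theta> \<phi> p = cmod (\<phi> \<omega> - \<phi> \<omega>') / \<theta> ^ k"
      unfolding pe k_def by (rule lip_ratio_at_first_diff[OF pe(4)])
    have "0 < \<theta> ^ k" using \<theta> by simp
    show ?thesis
    proof (cases "k \<ge> m0")
      case True
      have "cmod (\<phi> \<omega> - \<phi> \<omega>') \<le> var N A k \<phi>"
        unfolding k_def by (rule var_ge[OF bdd pe(2,3) agree_before_first_diff])
      then have "cmod (\<phi> \<omega> - \<phi> \<omega>') \<le> \<theta> ^ k" using small_var[OF True] by linarith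
      then have "lip_ratio \<theta> \<phi> p \<le> 1" unfolding ratio using \<open>0 < \<theta> ^ k\<close> by simp
      moreover have "0 \<le> 2 * B / \<theta> ^ m0" using \<open>B \<ge> 0\<close> \<theta> by simp
      ultimately show ?thesis by linarith
    next
      case False
      have "cmod (\<phi> \<omega>) \<le> B" "cmod (\<phi> \<omega>') \<le> B" using B pe(2,3) by auto
      then have "cmod (\<phi> \<omega> - \<phi> \<omega>') \<le> 2 * B"
        using norm_triangle_ineq4[of "\<phi> \<omega>" "\<phi> \<omega>'"] by simp
      moreover have "\<theta> ^ m0 \<le> \<theta> ^ k" using False \<theta> by (intro power_decreasing) auto
      ultimately have "cmod (\<phi> \<omega> - \<phi> \<omega>') / \<theta> ^ k \<le> 2 * B / \<theta> ^ m0"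
        using \<open>0 < \<theta> ^ k\<close> \<open>B \<ge> 0\<close> \<theta> by (intro frac_le) auto
      then show ?thesis unfolding ratio by linarith
    qed
  qed
  then have "bdd_above (lip_ratio \<theta> \<phi> ` distinct_pairs)" by (rule bdd_aboveI2)
  moreover have "bdd_above ((\<lambda>\<omega>. cmod (\<phi> \<omega>)) ` \<Sigma>)" using B by (auto intro: bdd_aboveI2)
  ultimately show ?thesis unfolding lip_bounded_def by simp
qed

subsection \<open>Cylinder functions\<close>

definition cylinder_fun :: "nat \<Rightarrow> nat \<Rightarrow> nat \<Rightarrow> real \<Rightarrow> (nat \<Rightarrow> nat) \<Rightarrow> complex" where
  "cylinder_fun a s K c =
     (\<lambda>\<zeta>. if \<zeta> \<in> \<Sigma> \<and> \<zeta> 0 = a \<and> \<zeta> (Suc K) = s then complex_of_real c else 0)"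

lemma cylinder_fun_cases: "cylinder_fun a s K c \<zeta> = 0 \<or> cylinder_fun a s K c \<zeta> = complex_of_real c"
  by (simp add: cylinder_fun_def)

text \<open>Of the preimages \<open>b\<zeta>\<close> of \<open>\<zeta>\<close> only \<open>a\<zeta>\<close> can lie in the cylinder.\<close>
lemma transfer_cylinder_fun:
  assumes a: "a \<in> {1..N}" and \<zeta>: "\<zeta> \<in> \<Sigma>"
  shows "transfer_op N A f (cylinder_fun a s K c) \<zeta> =
    (if A a (\<zeta> 0) = 1 \<and> \<zeta> K = s then exp (f (prepend a \<zeta>)) * complex_of_real c else 0)"
proof -
  let ?S = "{\<zeta>' \<in> \<Sigma>. shift \<zeta>' = \<zeta>}"
  have preimage: "\<zeta>' = prepend (\<zeta>' 0) \<zeta>" if "\<zeta>' \<in> ?S" for \<zeta>'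
    using that prepend_shift[of \<zeta>'] by auto
  have "?S \<subseteq> (\<lambda>b. prepend b \<zeta>) ` {1..N}"
    using preimage Sigma_symbol by blast
  then have fin: "finite ?S" by (rule finite_subset) simp
  define v where "v = exp (f (prepend a \<zeta>)) * (if \<zeta> K = s then complex_of_real c else 0)"
  have summand: "exp (f \<zeta>') * cylinder_fun a s K c \<zeta>' = (if \<zeta>' = prepend a \<zeta> then v else 0)"
    if "\<zeta>' \<in> ?S" for \<zeta>'
  proof (cases "\<zeta>' = prepend a \<zeta>")
    case False
    then have "\<zeta>' 0 \<noteq> a" using preimage[OF that] by metis
    then show ?thesis using False by (simp add: cylinder_fun_def)
  qed (use that in \<open>simp add: cylinder_fun_def v_def\<close>)
  have mem: "prepend a \<zeta> \<in> ?S \<longleftrightarrow> A a (\<zeta> 0) = 1"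
    using prepend_in_Sigma[OF \<zeta> a] unfolding Sigma_A_def by (auto dest: spec[of _ 0])
  have "(\<Sum>\<zeta>'\<in>?S. exp (f \<zeta>') * cylinder_fun a s K c \<zeta>') = (\<Sum>\<zeta>'\<in>?S. if \<zeta>' = prepend a \<zeta> then v else 0)"
    using summand by (rule sum.cong[OF refl])
  also have "\<dots> = (if prepend a \<zeta> \<in> ?S then v else 0)"
    using fin by simp
  finally show ?thesis unfolding transfer_op_def using \<zeta> mem by (auto simp: v_def)
qed

lemma cylinder_fun_in_Vspace:
  assumes "f \<in> Vspace N A"
  shows "cylinder_fun a s K c \<in> Vspace N A"
proof (rule Vspace_if_var_dominated[OF assms, of _ 0 "Suc (Suc K)"])
  have "cylinder_fun a s K c ` \<Sigma> \<subseteq> {0, complex_of_real c}" using cylinder_fun_cases by blast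
  then show "bounded (cylinder_fun a s K c ` \<Sigma>)" by (rule bounded_subset[rotated]) simp
  fix m \<omega> \<omega>' assume "Suc (Suc K) \<le> m" "\<omega> \<in> \<Sigma>" "\<omega>' \<in> \<Sigma>" "\<forall>k<m. \<omega> k = \<omega>' k"
  then show "cmod (cylinder_fun a s K c \<omega> - cylinder_fun a s K c \<omega>') \<le> 0 * var N A (Suc m) f"
    by (simp add: cylinder_fun_def)
qed (simp_all add: cylinder_fun_def)

lemma cylinder_fun_theta_norm_le:
  assumes \<theta>: "0 < \<theta>" "\<theta> < 1" and c: "0 \<le> c"
  shows "theta_norm N A \<theta> (cylinder_fun a s K c) \<le> 2 * c / \<theta> ^ Suc K"
proof -
  let ?\<psi> = "cylinder_fun a s K c"
  have "c * \<theta> ^ Suc K \<le> c" using \<theta> c by (intro mult_left_le power_le_one) auto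
  then have "c \<le> c / \<theta> ^ Suc K" using \<theta> by (simp add: le_divide_eq)
  moreover have "sup_norm N A ?\<psi> \<le> c"
    unfolding sup_norm_def
    by (rule cSUP_least[OF Sigma_nonempty]) (use c in \<open>simp add: cylinder_fun_def\<close>)
  moreover have "lip_const N A \<theta> ?\<psi> \<le> c / \<theta> ^ Suc K"
    unfolding lip_const_eq_SUP
  proof (rule cSUP_least[OF distinct_pairs_nonempty])
    fix p assume p: "p \<in> distinct_pairs"
    obtain \<omega> \<omega>' where pe: "p = (\<omega>, \<omega>')" "\<omega> \<in> \<Sigma>" "\<omega>' \<in> \<Sigma>" "\<omega> \<noteq> \<omega>'"
      using p unfolding distinct_pairs_def by auto
    define k where "k = first_diff \<omega> \<omega>'"
    have ratio: "lip_ratio \<theta> ?\<psi> p = cmod (?\<psi> \<omega> - ?\<psi> \<omega>') / \<theta> ^ k"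
      unfolding pe k_def by (rule lip_ratio_at_first_diff[OF pe(4)])
    show "lip_ratio \<theta> ?\<psi> p \<le> c / \<theta> ^ Suc K"
    proof (cases "k \<ge> Suc (Suc K)")
      case True
      then have "\<omega> 0 = \<omega>' 0" "\<omega> (Suc K) = \<omega>' (Suc K)"
        using agree_before_first_diff[of \<omega> \<omega>'] unfolding k_def by auto
      then have "?\<psi> \<omega> = ?\<psi> \<omega>'" using pe(2,3) by (simp add: cylinder_fun_def)
      then show ?thesis unfolding ratio using c \<theta> by simp
    next
      case False
      have "cmod (?\<psi> \<omega> - ?\<psi> \<omega>') \<le> c"
        using cylinder_fun_cases[of a s K c \<omega>] cylinder_fun_cases[of a s K c \<omega>'] c
        by (auto simp: norm_minus_commute)
      moreover have "\<theta> ^ Suc K \<le> \<theta> ^ k" using False \<theta> by (intro power_decreasing) auto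
      ultimately show ?thesis unfolding ratio using \<theta> c by (intro frac_le) auto
    qed
  qed
  ultimately show ?thesis unfolding theta_norm_def by linarith
qed

lemma norm_transfer_cylinder_fun_le:
  assumes a: "a \<in> {1..N}" and R: "\<forall>\<omega>\<in>\<Sigma>. cmod (f \<omega>) \<le> R" and c: "0 \<le> c" and \<zeta>: "\<zeta> \<in> \<Sigma>"
  shows "cmod (transfer_op N A f (cylinder_fun a s K c) \<zeta>) \<le> exp R * c"
proof (cases "A a (\<zeta> 0) = 1 \<and> \<zeta> K = s")
  case True
  then have "cmod (f (prepend a \<zeta>)) \<le> R" using R prepend_in_Sigma[OF \<zeta> a] by simp
  then have "cmod (exp (f (prepend a \<zeta>))) \<le> exp R"
    using norm_exp[of "f (prepend a \<zeta>)"] by (meson exp_le_cancel_iff order_trans)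
  then show ?thesis using transfer_cylinder_fun[OF a \<zeta>] True c
    by (simp add: norm_mult mult_right_mono)
qed (use transfer_cylinder_fun[OF a \<zeta>] c in auto)

text \<open>\<open>\<omega> \<mapsto> a\<omega>\<close> shifts variations by one index, and exp is Lipschitz on bounded sets.\<close>
lemma transfer_cylinder_fun_in_Vspace:
  assumes fV: "f \<in> Vspace N A" and a: "a \<in> {1..N}" and R: "\<forall>\<omega>\<in>\<Sigma>. cmod (f \<omega>) \<le> R" and c: "0 \<le> c"
  shows "transfer_op N A f (cylinder_fun a s K c) \<in> Vspace N A"
proof -
  let ?g = "transfer_op N A f (cylinder_fun a s K c)"
  have fb: "bounded (f ` \<Sigma>)" using fV unfolding Vspace_def by auto
  show ?thesis
  proof (rule Vspace_if_var_dominated[OF fV, of _ "c * exp R" "Suc K"])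
    show "\<forall>\<omega>. \<omega> \<notin> \<Sigma> \<longrightarrow> ?g \<omega> = 0" by (simp add: transfer_op_def)
    show "bounded (?g ` \<Sigma>)"
      unfolding bounded_iff using norm_transfer_cylinder_fun_le[OF a R c] by blast
    show "0 \<le> c * exp R" using c by simp
    fix m \<omega> \<omega>' assume m: "Suc K \<le> m" and \<omega>: "\<omega> \<in> \<Sigma>" "\<omega>' \<in> \<Sigma>" and agree: "\<forall>k<m. \<omega> k = \<omega>' k"
    then have same: "\<omega> 0 = \<omega>' 0" "\<omega> K = \<omega>' K" by auto
    show "cmod (?g \<omega> - ?g \<omega>') \<le> c * exp R * var N A (Suc m) f"
    proof (cases "A a (\<omega> 0) = 1 \<and> \<omega> K = s")
      case True
      then have pre: "prepend a \<omega> \<in> \<Sigma>" "prepend a \<omega>' \<in> \<Sigma>"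
        using prepend_in_Sigma[OF \<omega>(1) a] prepend_in_Sigma[OF \<omega>(2) a] same by auto
      have "cmod (?g \<omega> - ?g \<omega>') = cmod (exp (f (prepend a \<omega>)) - exp (f (prepend a \<omega>'))) * c"
        using transfer_cylinder_fun[OF a \<omega>(1)] transfer_cylinder_fun[OF a \<omega>(2)] True same c
        by (simp add: norm_mult flip: left_diff_distrib)
      also have "\<dots> \<le> exp R * cmod (f (prepend a \<omega>) - f (prepend a \<omega>')) * c"
        using norm_exp_diff_le R pre c by (intro mult_right_mono) auto
      also have "\<dots> \<le> exp R * var N A (Suc m) f * c"
        using var_ge[OF fb pre prepend_agree[OF agree]] c by (intro mult_right_mono) auto
      finally show ?thesis by (simp add: algebra_simps)
    next
      case False
      then have "?g \<omega> = 0" "?g \<omega>' = 0"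
        using transfer_cylinder_fun[OF a \<omega>(1)] transfer_cylinder_fun[OF a \<omega>(2)] same by auto
      then show ?thesis using c var_nonneg[OF fb] by simp
    qed
  qed
qed

lemma transfer_cylinder_fun_lip_ratio_ge:
  assumes a: "a \<in> {1..N}" and R: "\<forall>\<omega>\<in>\<Sigma>. cmod (f \<omega>) \<le> R" and c: "0 \<le> c" and \<theta>: "0 < \<theta>"
    and \<eta>: "\<eta> \<in> \<Sigma>" "\<eta>' \<in> \<Sigma>" "\<forall>k<K. \<eta> k = \<eta>' k" "\<eta> K \<noteq> \<eta>' K" "A a (\<eta> 0) = 1"
  shows "exp (- R) * c / \<theta> ^ K \<le> lip_ratio \<theta> (transfer_op N A f (cylinder_fun a (\<eta> K) K c)) (\<eta>, \<eta>')"
proof -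
  let ?g = "transfer_op N A f (cylinder_fun a (\<eta> K) K c)"
  have "\<eta> \<noteq> \<eta>'" using \<eta>(4) by auto
  have g: "?g \<eta> = exp (f (prepend a \<eta>)) * complex_of_real c" "?g \<eta>' = 0"
    using transfer_cylinder_fun[OF a \<eta>(1)] transfer_cylinder_fun[OF a \<eta>(2)] \<eta>(3-5) by auto
  have "cmod (f (prepend a \<eta>)) \<le> R" using R prepend_in_Sigma[OF \<eta>(1) a \<eta>(5)] by blast
  then have "exp (- R) \<le> exp (Re (f (prepend a \<eta>)))"
    using abs_Re_le_cmod[of "f (prepend a \<eta>)"] by simp
  then have "exp (- R) * c \<le> cmod (?g \<eta> - ?g \<eta>')"
    unfolding g using c by (simp add: norm_mult mult_right_mono)
  then show ?thesis
    unfolding lip_ratio_at_first_diff[OF \<open>\<eta> \<noteq> \<eta>'\<close>] first_diff_eqI[OF \<eta>(3,4)]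
    using \<theta> by (simp add: divide_right_mono)
qed

subsection \<open>The topology of V\<close>

abbreviation norm_balls :: "((nat \<Rightarrow> nat) \<Rightarrow> complex) set set" where
  "norm_balls \<equiv> {{\<psi> \<in> Vspace N A. theta_norm N A \<theta> (\<psi> - \<phi>) < \<epsilon>} | \<phi> \<theta> \<epsilon>.
     \<phi> \<in> Vspace N A \<and> 0 < \<theta> \<and> \<theta> < 1 \<and> 0 < \<epsilon>}"

lemma norm_ball_in_norm_balls:
  "\<phi> \<in> Vspace N A \<Longrightarrow> 0 < \<theta> \<Longrightarrow> \<theta> < 1 \<Longrightarrow> 0 < \<epsilon> \<Longrightarrow>
    {\<psi> \<in> Vspace N A. theta_norm N A \<theta> (\<psi> - \<phi>) < \<epsilon>} \<in> norm_balls"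
  by (intro CollectI exI[of _ \<phi>] exI[of _ \<theta>] exI[of _ \<epsilon>]) simp

lemma center_in_norm_ball:
  assumes "\<phi> \<in> Vspace N A" "0 < \<epsilon>"
  shows "\<phi> \<in> {\<psi> \<in> Vspace N A. theta_norm N A \<theta> (\<psi> - \<phi>) < \<epsilon>}"
proof -
  have "\<phi> - \<phi> = (\<lambda>_. 0)" by (simp add: fun_eq_iff)
  then show ?thesis using assms by (simp add: theta_norm_zero)
qed

lemma topspace_V_topology: "topspace (V_topology N A) = Vspace N A"
proof -
  have "\<Union>norm_balls \<subseteq> Vspace N A" by auto
  moreover have "Vspace N A \<subseteq> \<Union>norm_balls"
  proof
    fix g assume g: "g \<in> Vspace N A"
    have "{\<psi> \<in> Vspace N A. theta_norm N A (1/2) (\<psi> - g) < 1} \<in> norm_balls"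
      using g by (rule norm_ball_in_norm_balls) simp_all
    moreover have "g \<in> {\<psi> \<in> Vspace N A. theta_norm N A (1/2) (\<psi> - g) < 1}"
      using g by (rule center_in_norm_ball) simp
    ultimately show "g \<in> \<Union>norm_balls" by (rule UnionI)
  qed
  ultimately show ?thesis unfolding V_topology_def by simp
qed

lemma norm_ball_contains_zero_ball:
  assumes "(\<lambda>_. 0) \<in> {\<psi> \<in> Vspace N A. theta_norm N A \<theta> (\<psi> - \<phi>) < \<epsilon>}"
    and \<phi>: "\<phi> \<in> Vspace N A" and \<theta>: "0 < \<theta>" "\<theta> < 1"
  obtains \<delta> where "0 < \<delta>"
    "\<And>\<psi>. \<psi> \<in> Vspace N A \<Longrightarrow> theta_norm N A \<theta> \<psi> < \<delta> \<Longrightarrow> theta_norm N A \<theta> (\<psi> - \<phi>) < \<epsilon>"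
proof -
  define t where "t = theta_norm N A \<theta> ((\<lambda>_. 0) - \<phi>)"
  have "t < \<epsilon>" using assms(1) by (simp add: t_def)
  have minus_\<phi>: "lip_bounded \<theta> ((\<lambda>_. 0) - \<phi>)"
    using lip_bounded_diff[OF lip_bounded_zero Vspace_lip_bounded[OF \<phi> \<theta>] \<theta>(1)]
    unfolding fun_diff_def .
  have "theta_norm N A \<theta> (\<psi> - \<phi>) < \<epsilon>"
    if "\<psi> \<in> Vspace N A" "theta_norm N A \<theta> \<psi> < \<epsilon> - t" for \<psi>
  proof -
    have "theta_norm N A \<theta> (\<psi> - \<phi>) = theta_norm N A \<theta> (\<lambda>x. \<psi> x + ((\<lambda>_. 0) - \<phi>) x)"
      by (simp add: fun_diff_def)
    also have "\<dots> \<le> theta_norm N A \<theta> \<psi> + t"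
      unfolding t_def by (rule theta_norm_add_le[OF Vspace_lip_bounded[OF that(1) \<theta>] minus_\<phi> \<theta>(1)])
    finally show ?thesis using that(2) by simp
  qed
  then show thesis using that[of "\<epsilon> - t"] \<open>t < \<epsilon>\<close> by simp
qed

lemma generated_open_contains_zero_ball:
  assumes "generate_topology_on norm_balls W" "(\<lambda>_. 0) \<in> W"
  shows "\<exists>F. finite F \<and> (\<forall>(\<theta>, \<epsilon>)\<in>F. 0 < \<theta> \<and> \<theta> < 1 \<and> 0 < \<epsilon>)
           \<and> (\<forall>\<psi>\<in>Vspace N A. (\<forall>(\<theta>, \<epsilon>)\<in>F. theta_norm N A \<theta> \<psi> < \<epsilon>) \<longrightarrow> \<psi> \<in> W)"
  using assms
proof (induction rule: generate_topology_on.induct)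
  case (Int a b)
  have "(\<lambda>_. 0) \<in> a" "(\<lambda>_. 0) \<in> b" using Int.prems by auto
  obtain F1 where F1: "finite F1" "\<forall>(\<theta>, \<epsilon>)\<in>F1. 0 < \<theta> \<and> \<theta> < 1 \<and> 0 < \<epsilon>"
      "\<forall>\<psi>\<in>Vspace N A. (\<forall>(\<theta>, \<epsilon>)\<in>F1. theta_norm N A \<theta> \<psi> < \<epsilon>) \<longrightarrow> \<psi> \<in> a"
    using Int.IH(1)[OF \<open>(\<lambda>_. 0) \<in> a\<close>] by blast
  obtain F2 where F2: "finite F2" "\<forall>(\<theta>, \<epsilon>)\<in>F2. 0 < \<theta> \<and> \<theta> < 1 \<and> 0 < \<epsilon>"
      "\<forall>\<psi>\<in>Vspace N A. (\<forall>(\<theta>, \<epsilon>)\<in>F2. theta_norm N A \<theta> \<psi> < \<epsilon>) \<longrightarrow> \<psi> \<in> b"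
    using Int.IH(2)[OF \<open>(\<lambda>_. 0) \<in> b\<close>] by blast
  have "finite (F1 \<union> F2)" "\<forall>(\<theta>, \<epsilon>)\<in>F1 \<union> F2. 0 < \<theta> \<and> \<theta> < 1 \<and> 0 < \<epsilon>"
    using F1(1,2) F2(1,2) by blast+
  moreover have "\<forall>\<psi>\<in>Vspace N A. (\<forall>(\<theta>, \<epsilon>)\<in>F1 \<union> F2. theta_norm N A \<theta> \<psi> < \<epsilon>) \<longrightarrow> \<psi> \<in> a \<inter> b"
    using F1(3) F2(3) by blast
  ultimately show ?case by blast
next
  case (UN K)
  then obtain k where k: "k \<in> K" "(\<lambda>_. 0) \<in> k" by auto
  obtain F where F: "finite F" "\<forall>(\<theta>, \<epsilon>)\<in>F. 0 < \<theta> \<and> \<theta> < 1 \<and> 0 < \<epsilon>"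
      "\<forall>\<psi>\<in>Vspace N A. (\<forall>(\<theta>, \<epsilon>)\<in>F. theta_norm N A \<theta> \<psi> < \<epsilon>) \<longrightarrow> \<psi> \<in> k"
    using UN.IH[OF k] by blast
  then have "\<forall>\<psi>\<in>Vspace N A. (\<forall>(\<theta>, \<epsilon>)\<in>F. theta_norm N A \<theta> \<psi> < \<epsilon>) \<longrightarrow> \<psi> \<in> \<Union>K"
    using k(1) by blast
  then show ?case using F(1,2) by blast
next
  case (Basis s)
  then obtain \<phi> \<theta> \<epsilon> where s: "s = {\<psi> \<in> Vspace N A. theta_norm N A \<theta> (\<psi> - \<phi>) < \<epsilon>}"
    and \<phi>: "\<phi> \<in> Vspace N A" "0 < \<theta>" "\<theta> < 1" "0 < \<epsilon>"
    by (simp only: mem_Collect_eq) blast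
  obtain \<delta> where "0 < \<delta>"
    "\<And>\<psi>. \<psi> \<in> Vspace N A \<Longrightarrow> theta_norm N A \<theta> \<psi> < \<delta> \<Longrightarrow> theta_norm N A \<theta> (\<psi> - \<phi>) < \<epsilon>"
    using norm_ball_contains_zero_ball[OF Basis.prems[unfolded s] \<phi>(1-3)] by blast
  then show ?case using \<phi> s by (intro exI[of _ "{(\<theta>, \<delta>)}"]) auto
qed simp

text \<open>\<open>\<theta>0\<close> and \<open>\<epsilon>0\<close> are the minima over the finitely many basic balls involved.\<close>
lemma zero_neighbourhood_contains_uniform_ball:
  assumes "openin (V_topology N A) W" "(\<lambda>_. 0) \<in> W"
  obtains \<theta>0 \<epsilon>0 where "0 < \<theta>0" "\<theta>0 < 1" "0 < \<epsilon>0"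
    "\<And>\<psi>. \<psi> \<in> Vspace N A \<Longrightarrow> (\<And>\<theta>. \<theta>0 \<le> \<theta> \<Longrightarrow> \<theta> < 1 \<Longrightarrow> theta_norm N A \<theta> \<psi> < \<epsilon>0) \<Longrightarrow> \<psi> \<in> W"
proof -
  have "generate_topology_on norm_balls W"
    using assms(1) unfolding V_topology_def by (rule openin_topology_generated_by)
  then obtain F where F: "finite F" "\<forall>(\<theta>, \<epsilon>)\<in>F. 0 < \<theta> \<and> \<theta> < 1 \<and> 0 < \<epsilon>"
      "\<forall>\<psi>\<in>Vspace N A. (\<forall>(\<theta>, \<epsilon>)\<in>F. theta_norm N A \<theta> \<psi> < \<epsilon>) \<longrightarrow> \<psi> \<in> W"
    using generated_open_contains_zero_ball[OF _ assms(2)] by blast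
  define \<theta>0 where "\<theta>0 = Min (insert (1/2) (fst ` F))"
  define \<epsilon>0 where "\<epsilon>0 = Min (insert 1 (snd ` F))"
  have "0 < \<theta>0" "\<theta>0 < 1" "0 < \<epsilon>0"
    unfolding \<theta>0_def \<epsilon>0_def using F(1,2) by (auto simp: Min_gr_iff Min_less_iff)
  moreover have "\<psi> \<in> W"
    if \<psi>: "\<psi> \<in> Vspace N A" "\<And>\<theta>. \<theta>0 \<le> \<theta> \<Longrightarrow> \<theta> < 1 \<Longrightarrow> theta_norm N A \<theta> \<psi> < \<epsilon>0" for \<psi>
  proof -
    have "theta_norm N A \<theta> \<psi> < \<epsilon>" if "(\<theta>, \<epsilon>) \<in> F" for \<theta> \<epsilon>
    proof -
      have "\<theta>0 \<le> \<theta>" "\<epsilon>0 \<le> \<epsilon>"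
        unfolding \<theta>0_def \<epsilon>0_def using F(1) that by (auto intro!: Min_le simp: image_iff)
          (metis fst_conv snd_conv)+
      then show ?thesis using \<psi>(2)[of \<theta>] F(2) that by fastforce
    qed
    then show ?thesis using F(3) \<psi>(1) by blast
  qed
  ultimately show thesis using that by blast
qed

text \<open>A compact set is covered by finitely many \<open>\<parallel>\<cdot>\<parallel>\<^sub>\<theta>\<close>-balls of radius 1; on the ball
  around \<open>\<phi>\<close> the \<open>\<theta>\<close>-Lipschitz ratios are below \<open>1 + Lip\<^sub>\<theta>(\<phi>)\<close>.\<close>
lemma compactin_lip_ratio_bounded:
  assumes K: "compactin (V_topology N A) K" and \<theta>: "0 < \<theta>" "\<theta> < 1"
  obtains B where "\<And>z p. z \<in> K \<Longrightarrow> p \<in> distinct_pairs \<Longrightarrow> lip_ratio \<theta> z p \<le> B"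
proof -
  let ?T = "V_topology N A"
  define ball where "ball \<phi> = {\<psi> \<in> Vspace N A. theta_norm N A \<theta> (\<psi> - \<phi>) < 1}" for \<phi>
  have KV: "K \<subseteq> Vspace N A" using compactin_subset_topspace[OF K] topspace_V_topology by simp
  have "openin ?T (ball \<phi>)" if "\<phi> \<in> Vspace N A" for \<phi>
    unfolding V_topology_def openin_topology_generated_by_iff ball_def
    by (rule generate_topology_on.Basis) (rule norm_ball_in_norm_balls[OF that \<theta>], simp)
  then have "\<forall>u\<in>ball ` K. openin ?T u" using KV by blast
  moreover have "K \<subseteq> \<Union>(ball ` K)"
  proof
    fix z assume "z \<in> K"
    then have "z \<in> ball z" unfolding ball_def using KV by (intro center_in_norm_ball) auto
    then show "z \<in> \<Union>(ball ` K)" using \<open>z \<in> K\<close> by blast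
  qed
  ultimately obtain \<F> where "finite \<F>" "\<F> \<subseteq> ball ` K" "K \<subseteq> \<Union>\<F>"
    using K unfolding compactin_def by meson
  then obtain G where G: "finite G" "G \<subseteq> K" "K \<subseteq> \<Union>(ball ` G)"
    by (metis finite_subset_image)
  define B where "B = 1 + (\<Sum>\<phi>\<in>G. \<bar>lip_const N A \<theta> \<phi>\<bar>)"
  have "lip_ratio \<theta> z p \<le> B" if z: "z \<in> K" and p: "p \<in> distinct_pairs" for z p
  proof -
    obtain \<phi> where \<phi>: "\<phi> \<in> G" "z \<in> ball \<phi>" using z G(3) by blast
    have lb: "lip_bounded \<theta> z" "lip_bounded \<theta> \<phi>"
      using Vspace_lip_bounded[OF _ \<theta>] z \<phi>(1) G(2) KV by auto
    have "lip_ratio \<theta> z p \<le> lip_ratio \<theta> (\<lambda>x. z x - \<phi> x) p + lip_ratio \<theta> \<phi> p"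
      using lip_ratio_add[OF p \<theta>(1), of "\<lambda>x. z x - \<phi> x" \<phi>] by simp
    moreover have "lip_ratio \<theta> (\<lambda>x. z x - \<phi> x) p < 1"
    proof -
      have "lip_bounded \<theta> (\<lambda>x. z x - \<phi> x)" by (rule lip_bounded_diff[OF lb \<theta>(1)])
      then have "lip_ratio \<theta> (\<lambda>x. z x - \<phi> x) p \<le> theta_norm N A \<theta> (\<lambda>x. z x - \<phi> x)"
        using lip_ratio_le_lip_const[OF _ p] lip_const_le_theta_norm by (meson order_trans)
      also have "\<dots> < 1" using \<phi>(2) unfolding ball_def fun_diff_def by simp
      finally show ?thesis .
    qed
    moreover have "\<bar>lip_const N A \<theta> \<phi>\<bar> \<le> (\<Sum>\<phi>\<in>G. \<bar>lip_const N A \<theta> \<phi>\<bar>)"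
      using G(1) \<phi>(1) by (intro member_le_sum) auto
    ultimately show ?thesis
      using lip_ratio_le_lip_const[OF lb(2) p] unfolding B_def by linarith
  qed
  then show thesis using that by blast
qed

lemma transfer_cylinder_fun_escapes:
  assumes fV: "f \<in> Vspace N A" and \<theta>0: "0 < \<theta>0" "\<theta>0 < 1" and "0 < \<epsilon>0"
  obtains \<psi> p where "\<psi> \<in> Vspace N A" "\<And>\<theta>. \<theta>0 \<le> \<theta> \<Longrightarrow> \<theta> < 1 \<Longrightarrow> theta_norm N A \<theta> \<psi> < \<epsilon>0"
    "transfer_op N A f \<psi> \<in> Vspace N A" "p \<in> distinct_pairs"
    "B < lip_ratio (\<theta>0 / 2) (transfer_op N A f \<psi>) p"
proof -
  obtain R where R: "\<forall>\<omega>\<in>\<Sigma>. cmod (f \<omega>) \<le> R"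
    using fV unfolding Vspace_def bounded_iff by auto
  define D where "D = exp (- R) * \<epsilon>0 * \<theta>0 / 4"
  have "0 < D" unfolding D_def using \<open>0 < \<epsilon>0\<close> \<theta>0 by simp
  obtain n where n: "B / D < 2 ^ n" using real_arch_pow[of "2::real" "B / D"] by auto
  obtain \<eta> \<eta>' K where \<eta>: "\<eta> \<in> \<Sigma>" "\<eta>' \<in> \<Sigma>" "n < K" "\<forall>k<K. \<eta> k = \<eta>' k" "\<eta> K \<noteq> \<eta>' K"
    using pair_differing_after[of n] by blast
  obtain a where a: "a \<in> {1..N}" "A a (\<eta> 0) = 1"
    using predecessor_exists[OF Sigma_symbol[OF \<eta>(1)]] by blast
  define c where "c = \<epsilon>0 * \<theta>0 ^ Suc K / 4"
  have "0 \<le> c" unfolding c_def using \<open>0 < \<epsilon>0\<close> \<theta>0 by simp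
  define \<psi> where "\<psi> = cylinder_fun a (\<eta> K) K c"
  have "theta_norm N A \<theta> \<psi> < \<epsilon>0" if "\<theta>0 \<le> \<theta>" "\<theta> < 1" for \<theta>
  proof -
    have "theta_norm N A \<theta> \<psi> \<le> 2 * c / \<theta> ^ Suc K"
      unfolding \<psi>_def using cylinder_fun_theta_norm_le \<open>0 \<le> c\<close> \<theta>0 that by simp
    also have "\<dots> \<le> 2 * c / \<theta>0 ^ Suc K"
      using \<open>0 \<le> c\<close> \<theta>0 that by (intro divide_left_mono power_mono) auto
    also have "\<dots> = \<epsilon>0 / 2" unfolding c_def using \<theta>0 by simp
    finally show ?thesis using \<open>0 < \<epsilon>0\<close> by linarith
  qed
  moreover have "B < lip_ratio (\<theta>0 / 2) (transfer_op N A f \<psi>) (\<eta>, \<eta>')"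
  proof -
    have "B < D * 2 ^ n" using n \<open>0 < D\<close> by (simp add: pos_divide_less_eq mult.commute)
    also have "\<dots> \<le> D * 2 ^ K" using \<open>0 < D\<close> \<eta>(3) by (intro mult_left_mono power_increasing) auto
    also have "\<dots> = exp (- R) * c / (\<theta>0 / 2) ^ K"
      unfolding D_def c_def using \<theta>0 by (simp add: power_divide field_simps)
    also have "\<dots> \<le> lip_ratio (\<theta>0 / 2) (transfer_op N A f \<psi>) (\<eta>, \<eta>')"
      unfolding \<psi>_def using transfer_cylinder_fun_lip_ratio_ge[OF a(1) R \<open>0 \<le> c\<close> _ \<eta>(1,2,4,5) a(2)] \<theta>0
      by simp
    finally show ?thesis .
  qed
  moreover have "(\<eta>, \<eta>') \<in> distinct_pairs" using \<eta> unfolding distinct_pairs_def by auto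
  ultimately show thesis
    using that cylinder_fun_in_Vspace[OF fV] transfer_cylinder_fun_in_Vspace[OF fV a(1) R \<open>0 \<le> c\<close>]
    unfolding \<psi>_def by blast
qed

end

theorem theoremA1:
  fixes N :: nat and A :: "nat \<Rightarrow> nat \<Rightarrow> nat" and f :: "(nat \<Rightarrow> nat) \<Rightarrow> complex"
  assumes "N \<ge> 2"
    and "zero_one_matrix N A"
    and "aperiodic N A"
    and "f \<in> Vspace N A"
  shows "\<forall>U. (U \<subseteq> Vspace N A \<and> (\<exists>W. openin (V_topology N A) W \<and> (\<lambda>_. 0) \<in> W \<and> W \<subseteq> U))
           \<longrightarrow> \<not> compactin (V_topology N A) ((V_topology N A) closure_of (transfer_op N A f ` U))"
proof (intro allI impI notI)
  interpret aperiodic_sft N A using assms(1-3) by unfold_locales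
  fix U assume "U \<subseteq> Vspace N A \<and> (\<exists>W. openin (V_topology N A) W \<and> (\<lambda>_. 0) \<in> W \<and> W \<subseteq> U)"
  then obtain W where W: "openin (V_topology N A) W" "(\<lambda>_. 0) \<in> W" "W \<subseteq> U" by blast
  obtain \<theta>0 \<epsilon>0 where \<theta>0: "0 < \<theta>0" "\<theta>0 < 1" and "0 < \<epsilon>0"
    and small_in_W: "\<And>\<psi>. \<psi> \<in> Vspace N A \<Longrightarrow> (\<And>\<theta>. \<theta>0 \<le> \<theta> \<Longrightarrow> \<theta> < 1 \<Longrightarrow> theta_norm N A \<theta> \<psi> < \<epsilon>0) \<Longrightarrow> \<psi> \<in> W"
    using zero_neighbourhood_contains_uniform_ball[OF W(1,2)] by blast
  let ?K = "V_topology N A closure_of (transfer_op N A f ` U)"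
  assume "compactin (V_topology N A) ?K"
  moreover have "0 < \<theta>0 / 2" "\<theta>0 / 2 < 1" using \<theta>0 by auto
  ultimately obtain B where B: "\<And>z p. z \<in> ?K \<Longrightarrow> p \<in> distinct_pairs \<Longrightarrow> lip_ratio (\<theta>0 / 2) z p \<le> B"
    by (rule compactin_lip_ratio_bounded) blast
  obtain \<psi> p where \<psi>: "\<psi> \<in> Vspace N A" "\<And>\<theta>. \<theta>0 \<le> \<theta> \<Longrightarrow> \<theta> < 1 \<Longrightarrow> theta_norm N A \<theta> \<psi> < \<epsilon>0"
    and "transfer_op N A f \<psi> \<in> Vspace N A" "p \<in> distinct_pairs"
    and "B < lip_ratio (\<theta>0 / 2) (transfer_op N A f \<psi>) p"
    using transfer_cylinder_fun_escapes[OF assms(4) \<theta>0 \<open>0 < \<epsilon>0\<close>] by blast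
  moreover have "transfer_op N A f \<psi> \<in> ?K"
    using small_in_W[OF \<psi>] W(3) calculation(3) topspace_V_topology
    by (auto simp: in_closure_of)
  ultimately show False using B by fastforce
qed

end
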